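(* If $\lim_{|x|\to\infty}\int_{-\infty}^{\infty}G(x,t)\,dt=0$, then $$\lim_{N\to\infty}\sup_{x\in\mathbb R}\int_{-\infty}^{-N}G(x,t)\,dt=0\quad\text{and}\quad \lim_{N\to\infty}\sup_{x\in\mathbb R}\int_{N}^{\infty}G(x,t)\,dt=0.$$
   Context: Let $q:\mathbb R\to\mathbb R$ be measurable with $q\in L_1^{\mathrm{loc}}(\mathbb R)$ and $q(x)\ge1$ a.e. A principal fundamental system of solutions (PFSS) of $z''=q(x)z$ is a pair $u,v$ of solutions ($C^1$, derivative locally absolutely continuous, equation a.e.) such that for all $x$: $u>0$, $v>0$, $u'<0$, $v'>0$, $v'u-u'v=1$, $u(x)=v(x)\int_x^\infty v(t)^{-2}dt$, and $u,u'\to0$ as $x\to\infty$, $v,v'\to0$ as $x\to-\infty$, $v,v'\to\infty$ as $x\to\infty$, $u,|u'|\to\infty$ as $x\to-\infty$. Fix a PFSS $\{u,v\}$. The Green function is $G(x,t)=u(x)v(t)$ for $x\ge t$ and $G(x,t)=u(t)v(x)$ for $x\le t$. *)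

theory Defs
  imports "HOL-Analysis.Analysis"
begin

definition admissible_potential :: "(real \<Rightarrow> real) \<Rightarrow> bool" where
  "admissible_potential q \<longleftrightarrow>
     q \<in> borel_measurable lborel \<and>
     (\<forall>a b. set_integrable lborel {a..b} q) \<and>
     (AE x in lborel. q x \<ge> 1)"

text \<open>z is a solution of z'' = q z with derivative z': z is C^1 with derivative z',
  and z' is locally absolutely continuous with z'' = q z a.e., i.e.
  z'(b) - z'(a) is the integral of q z over [a,b].\<close>
definition is_solution :: "(real \<Rightarrow> real) \<Rightarrow> (real \<Rightarrow> real) \<Rightarrow> (real \<Rightarrow> real) \<Rightarrow> bool" where
  "is_solution q z z' \<longleftrightarrow>
     (\<forall>x. (z has_real_derivative z' x) (at x)) \<and>
     continuous_on UNIV z' \<and>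
     (\<forall>a b. a \<le> b \<longrightarrow> ((\<lambda>t. q t * z t) has_integral (z' b - z' a)) {a..b})"

definition PFSS :: "(real \<Rightarrow> real) \<Rightarrow> (real \<Rightarrow> real) \<Rightarrow> (real \<Rightarrow> real) \<Rightarrow>
    (real \<Rightarrow> real) \<Rightarrow> (real \<Rightarrow> real) \<Rightarrow> bool" where
  "PFSS q u u' v v' \<longleftrightarrow>
     is_solution q u u' \<and> is_solution q v v' \<and>
     (\<forall>x. u x > 0 \<and> v x > 0 \<and> u' x < 0 \<and> v' x > 0 \<and>
          v' x * u x - u' x * v x = 1 \<and>
          (\<lambda>t. 1 / (v t)\<^sup>2) integrable_on {x..} \<and>
          u x = v x * integral {x..} (\<lambda>t. 1 / (v t)\<^sup>2)) \<and>
     (u \<longlongrightarrow> 0) at_top \<and> (u' \<longlongrightarrow> 0) at_top \<and>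
     (v \<longlongrightarrow> 0) at_bot \<and> (v' \<longlongrightarrow> 0) at_bot \<and>
     filterlim v at_top at_top \<and> filterlim v' at_top at_top \<and>
     filterlim u at_top at_bot \<and> filterlim (\<lambda>x. \<bar>u' x\<bar>) at_top at_bot"

definition green :: "(real \<Rightarrow> real) \<Rightarrow> (real \<Rightarrow> real) \<Rightarrow> real \<Rightarrow> real \<Rightarrow> real" where
  "green u v x t = (if t \<le> x then u x * v t else u t * v x)"

end

theory Submission
  imports Defs
begin

text \<open>A tail integral of G(x, .) is dominated by the full integral I(y) at a point y with
  |y| \<ge> N: either x itself lies beyond the cut-off, or, since u decreases and v increases,
  moving x to the cut-off point \<plusminus>N only enlarges G(x, t) on the tail. So the uniform tail
  bounds follow from I(y) \<rightarrow> 0 as |y| \<rightarrow> \<infinity>. Only positivity and monotonicity of u and v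
  enter.\<close>

lemma PFSS_pos:
  assumes "PFSS q u u' v v'"
  shows "u x > 0" "v x > 0"
  using assms unfolding PFSS_def by blast+

lemma PFSS_antimono_u:
  assumes "PFSS q u u' v v'"
  shows "antimono u"
proof (rule antimonoI)
  fix a b :: real assume "a \<le> b"
  have "\<And>x. (u has_real_derivative u' x) (at x)" "\<And>x. u' x < 0"
    using assms unfolding PFSS_def is_solution_def by auto
  then show "u b \<le> u a"
    using \<open>a \<le> b\<close> DERIV_neg_imp_decreasing[of a b u] by (cases "a = b") force+
qed

lemma PFSS_mono_v:
  assumes "PFSS q u u' v v'"
  shows "mono v"
proof (rule monoI)
  fix a b :: real assume "a \<le> b"
  have "\<And>x. (v has_real_derivative v' x) (at x)" "\<And>x. v' x > 0"
    using assms unfolding PFSS_def is_solution_def by auto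
  then show "v a \<le> v b"
    using \<open>a \<le> b\<close> DERIV_pos_imp_increasing[of a b v] by (cases "a = b") force+
qed

lemma green_le_green_left:
  assumes "antimono u" "\<And>s. 0 \<le> v s" "t \<le> y" "y \<le> x"
  shows "green u v x t \<le> green u v y t"
  using assms antimonoD[OF assms(1) \<open>y \<le> x\<close>]
  by (auto simp: green_def intro: mult_right_mono)

lemma green_le_green_right:
  assumes "mono v" "\<And>s. 0 \<le> u s" "x \<le> y" "y \<le> t"
  shows "green u v x t \<le> green u v y t"
  using assms monoD[OF assms(1) \<open>x \<le> y\<close>]
  by (auto simp: green_def intro: mult_left_mono)

lemma nn_set_integral_le_nn_integral:
  "(\<integral>\<^sup>+ t\<in>A. f t \<partial>M) \<le> (\<integral>\<^sup>+ t. f t \<partial>M)"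
  by (intro nn_integral_mono) (simp split: split_indicator)

lemma green_left_tail_dominated:
  assumes "antimono u" "\<And>s. 0 \<le> v s"
  shows "\<exists>y. N \<le> \<bar>y\<bar> \<and>
    (\<integral>\<^sup>+ t\<in>{..-N}. ennreal (green u v x t) \<partial>lborel) \<le> (\<integral>\<^sup>+ t. ennreal (green u v y t) \<partial>lborel)"
proof (cases "x < -N")
  case True
  then show ?thesis using nn_set_integral_le_nn_integral by (intro exI[of _ x]) auto
next
  case False
  have "(\<integral>\<^sup>+ t\<in>{..-N}. ennreal (green u v x t) \<partial>lborel)
      \<le> (\<integral>\<^sup>+ t\<in>{..-N}. ennreal (green u v (-N) t) \<partial>lborel)"
    using False green_le_green_left[OF assms]
    by (intro nn_integral_mono) (auto split: split_indicator intro: ennreal_leI)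
  also have "\<dots> \<le> (\<integral>\<^sup>+ t. ennreal (green u v (-N) t) \<partial>lborel)"
    by (rule nn_set_integral_le_nn_integral)
  finally show ?thesis by (intro exI[of _ "-N"]) auto
qed

lemma green_right_tail_dominated:
  assumes "mono v" "\<And>s. 0 \<le> u s"
  shows "\<exists>y. N \<le> \<bar>y\<bar> \<and>
    (\<integral>\<^sup>+ t\<in>{N..}. ennreal (green u v x t) \<partial>lborel) \<le> (\<integral>\<^sup>+ t. ennreal (green u v y t) \<partial>lborel)"
proof (cases "x > N")
  case True
  then show ?thesis using nn_set_integral_le_nn_integral by (intro exI[of _ x]) auto
next
  case False
  have "(\<integral>\<^sup>+ t\<in>{N..}. ennreal (green u v x t) \<partial>lborel)
      \<le> (\<integral>\<^sup>+ t\<in>{N..}. ennreal (green u v N t) \<partial>lborel)"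
    using False green_le_green_right[OF assms]
    by (intro nn_integral_mono) (auto split: split_indicator intro: ennreal_leI)
  also have "\<dots> \<le> (\<integral>\<^sup>+ t. ennreal (green u v N t) \<partial>lborel)"
    by (rule nn_set_integral_le_nn_integral)
  finally show ?thesis by (intro exI[of _ N]) auto
qed

lemma tendsto_SUP_zero_if_dominated_at_infinity:
  fixes F :: "real \<Rightarrow> 'a \<Rightarrow> ennreal" and I :: "real \<Rightarrow> ennreal"
  assumes I: "(I \<longlongrightarrow> 0) at_infinity"
    and dominated: "\<And>N x. \<exists>y. N \<le> \<bar>y\<bar> \<and> F N x \<le> I y"
  shows "((\<lambda>N. SUP x. F N x) \<longlongrightarrow> 0) at_top"
proof (rule order_tendstoI)
  fix e :: ennreal assume "0 < e"
  then obtain e' where e': "0 < e'" "e' < e" using dense by blast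
  obtain b where b: "\<And>y. b \<le> \<bar>y\<bar> \<Longrightarrow> I y < e'"
    using order_tendstoD(2)[OF I \<open>0 < e'\<close>] unfolding eventually_at_infinity by auto
  have "(SUP x. F N x) \<le> e'" if "b \<le> N" for N
  proof (rule SUP_least)
    fix x
    obtain y where "N \<le> \<bar>y\<bar>" "F N x \<le> I y" using dominated by blast
    with b[of y] \<open>b \<le> N\<close> show "F N x \<le> e'" by auto
  qed
  then show "eventually (\<lambda>N. (SUP x. F N x) < e) at_top"
    unfolding eventually_at_top_linorder using e'(2) by (blast intro: le_less_trans)
qed simp

theorem lemma5p3:
  fixes q u u' v v' :: "real \<Rightarrow> real"
  assumes "admissible_potential q"
    and "PFSS q u u' v v'"
    and "((\<lambda>x. \<integral>\<^sup>+ t. ennreal (green u v x t) \<partial>lborel) \<longlongrightarrow> 0) at_infinity"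
  shows "((\<lambda>N::real. SUP x. \<integral>\<^sup>+ t\<in>{..-N}. ennreal (green u v x t) \<partial>lborel) \<longlongrightarrow> 0) at_top
       \<and> ((\<lambda>N::real. SUP x. \<integral>\<^sup>+ t\<in>{N..}. ennreal (green u v x t) \<partial>lborel) \<longlongrightarrow> 0) at_top"
proof -
  have "0 \<le> u s" "0 \<le> v s" for s
    using PFSS_pos[OF assms(2)] by (auto intro: less_imp_le)
  then show ?thesis
    by (intro conjI tendsto_SUP_zero_if_dominated_at_infinity[OF assms(3)]
        green_left_tail_dominated[OF PFSS_antimono_u[OF assms(2)]]
        green_right_tail_dominated[OF PFSS_mono_v[OF assms(2)]])
qed

end
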